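(* Let $n\ge2$ and $1\le p\le n-1$. A permutation $\pi\in S_n$ is a $p$-resultant permutation if and only if $\{\pi_1,\dots,\pi_{n-p}\}=\{1,\dots,n-p\}$, i.e. $(\pi_1,\dots,\pi_{n-p})\in S_{n-p}$.
   Context: For $m\ge1$, $1\le p\le m$: sites are $0,\dots,m+1$; a configuration in $\mathcal{S}(m,p)$ places $m+1$ distinct chips labeled $1,\dots,m+1$ with sites $0,m+1$ empty, one chip at each site of $\{1,\dots,m\}\setminus\{p\}$ and two chips at site $p$. Toppling: while some site holds at least two chips, choose such a site $i$ and two chips $\alpha<\beta$ there and move $\alpha$ to $i-1$, $\beta$ to $i+1$. It is known this terminates with at most one chip per site within sites $0,\dots,m+1$ and the final configuration is independent of the choices; reading chip labels left to right gives a permutation in $S_{m+1}$, to which the configuration is said to topple. A permutation $\pi\in S_n$ is $p$-resultant if some configuration in $\mathcal{S}(n-1,p)$ topples to $\pi$. *)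

theory Defs
  imports Main
begin

text \<open>A chip configuration with chips labelled 1..m+1 is a function assigning
  to each chip label its site (an integer). Only the values on labels 1..m+1 matter.\<close>

type_synonym config = "nat \<Rightarrow> int"

definition chips :: "nat \<Rightarrow> nat set" where
  "chips m = {1..m+1}"

definition init_configs :: "nat \<Rightarrow> nat \<Rightarrow> config set" where
  "init_configs m p = {c. (\<forall>a\<in>chips m. 1 \<le> c a \<and> c a \<le> int m) \<and>
      (\<forall>s\<in>{1..int m}. card {a\<in>chips m. c a = s} = (if s = int p then 2 else 1))}"

definition topple_step :: "nat \<Rightarrow> config \<Rightarrow> config \<Rightarrow> bool" where
  "topple_step m c c' \<longleftrightarrow> (\<exists>\<alpha>\<in>chips m. \<exists>\<beta>\<in>chips m. \<alpha> < \<beta> \<and> c \<alpha> = c \<beta> \<and>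
       c' = c(\<alpha> := c \<alpha> - 1, \<beta> := c \<beta> + 1))"

definition stable :: "nat \<Rightarrow> config \<Rightarrow> bool" where
  "stable m c \<longleftrightarrow> inj_on c (chips m)"

definition reading :: "nat \<Rightarrow> config \<Rightarrow> nat list" where
  "reading m c = sort_key c [1..<m+2]"

definition topples_to :: "nat \<Rightarrow> config \<Rightarrow> nat list \<Rightarrow> bool" where
  "topples_to m c \<pi> \<longleftrightarrow> (\<exists>c'. (topple_step m)\<^sup>*\<^sup>* c c' \<and> stable m c' \<and> reading m c' = \<pi>)"

text \<open>Permutations of S_n as lists (one-line notation).\<close>
definition is_perm :: "nat \<Rightarrow> nat list \<Rightarrow> bool" where
  "is_perm n \<pi> \<longleftrightarrow> distinct \<pi> \<and> set \<pi> = {1..n}"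

definition p_resultant :: "nat \<Rightarrow> nat \<Rightarrow> nat list \<Rightarrow> bool" where
  "p_resultant n p \<pi> \<longleftrightarrow> (\<exists>c\<in>init_configs (n-1) p. topples_to (n-1) c \<pi>)"

end

theory Submission
  imports Defs "HOL-Library.Confluence" "HOL-Library.Multiset"
begin

text \<open>Write \<open>h = n - p\<close> and call the chips \<open>1, \<dots>, h\<close> small, the other \<open>p\<close> chips big.

  The invariant \<open>s \<le> #(chips on sites \<le> s) \<le> s + 1\<close> holds initially and
  is preserved by toppling; under it every unstable site carries exactly two chips and no two
  unstable sites are adjacent, so different topplings commute and the stable configuration can be
  computed along one convenient order. Topple in \<open>h\<close> waves: before wave \<open>j\<close> site \<open>j\<close> is empty
  and site \<open>p + j\<close> carries two chips; the wave topples \<open>p + j, p + j - 1, \<dots>, j + 1\<close> in turn,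
  each time sending the smaller chip to the left, so the chip arriving on site \<open>j\<close> is the smallest
  chip of the sites \<open>j + 1, \<dots>, p + j\<close>. By pigeonhole one of those is small, hence after the
  \<open>h\<close> waves the sites \<open>0, \<dots>, h - 1\<close> carry exactly the small chips.

  Put the last \<open>p\<close> entries of \<open>\<pi>\<close> on the sites \<open>1, \<dots>, p\<close> and the
  first \<open>h\<close> entries on the sites \<open>p, \<dots>, n - 1\<close>, both in the order of \<open>\<pi>\<close>. In wave \<open>j\<close> the
  travelling chip is the \<open>(j + 1)\<close>-st entry of \<open>\<pi>\<close>, which is small, and every chip it meets is
  big, so it runs down to site \<open>j\<close> while the big chips shift one site to the right; after \<open>h\<close>
  waves the chips read \<open>\<pi>\<close>.\<close>

section \<open>Chip counts\<close>

definition num_chips :: "nat \<Rightarrow> config \<Rightarrow> int \<Rightarrow> nat" where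
  "num_chips m c s = card {a \<in> chips m. c a = s}"

definition num_chips_le :: "nat \<Rightarrow> config \<Rightarrow> int \<Rightarrow> nat" where
  "num_chips_le m c s = card {a \<in> chips m. c a \<le> s}"

lemma finite_chips [simp]: "finite (chips m)"
  by (simp add: chips_def)

lemma topple_stepE:
  assumes "topple_step m c c'"
  obtains \<alpha> \<beta> v where "\<alpha> \<in> chips m" "\<beta> \<in> chips m" "\<alpha> < \<beta>" "c \<alpha> = v" "c \<beta> = v"
    "c' = c(\<alpha> := v - 1, \<beta> := v + 1)"
  using assms unfolding topple_step_def by force

lemma topple_stepI:
  assumes "\<alpha> \<in> chips m" "\<beta> \<in> chips m" "\<alpha> < \<beta>" "c \<alpha> = v" "c \<beta> = v"
  shows "topple_step m c (c(\<alpha> := v - 1, \<beta> := v + 1))"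
  unfolding topple_step_def using assms by metis

lemma card_chips [simp]: "card (chips m) = m + 1"
  by (simp add: chips_def)

lemma num_chips_pos: "a \<in> chips m \<Longrightarrow> 0 < num_chips m c (c a)"
  unfolding num_chips_def card_gt_0_iff by auto

lemma num_chips_le_one_inj:
  "\<lbrakk>num_chips m c s \<le> 1; a \<in> chips m; b \<in> chips m; c a = s; c b = s\<rbrakk> \<Longrightarrow> a = b"
  unfolding num_chips_def using card_le_Suc0_iff_eq[of "{x \<in> chips m. c x = s}"] by auto

lemma num_chips_two_iff:
  assumes "a \<in> chips m" "b \<in> chips m" "a \<noteq> b" "c a = v" "c b = v"
  shows "num_chips m c v = 2 \<longleftrightarrow> {x \<in> chips m. c x = v} = {a, b}"
proof
  have sub: "{a, b} \<subseteq> {x \<in> chips m. c x = v}" using assms by auto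
  show "num_chips m c v = 2 \<Longrightarrow> {x \<in> chips m. c x = v} = {a, b}"
    using card_subset_eq[OF _ sub] assms(3) unfolding num_chips_def by simp
qed (use assms(3) in \<open>simp add: num_chips_def\<close>)

lemma num_chips_ge_two:
  assumes "a \<in> chips m" "b \<in> chips m" "a \<noteq> b" "c a = v" "c b = v"
  shows "num_chips m c v \<ge> 2"
proof -
  have "{a, b} \<subseteq> {x \<in> chips m. c x = v}" using assms by auto
  then have "card {a, b} \<le> num_chips m c v"
    unfolding num_chips_def by (intro card_mono) auto
  then show ?thesis using assms(3) by simp
qed

lemma num_chips_fire:
  assumes "\<alpha> \<in> chips m" "\<beta> \<in> chips m" "\<alpha> \<noteq> \<beta>" "c \<alpha> = v" "c \<beta> = v"
  shows "int (num_chips m (c(\<alpha> := v - 1, \<beta> := v + 1)) s) = int (num_chips m c s)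
     - (if s = v then 2 else 0) + (if s = v - 1 then 1 else 0) + (if s = v + 1 then 1 else 0)"
proof -
  let ?A = "{a \<in> chips m. c a = s}" and ?B = "{a \<in> chips m. (c(\<alpha> := v - 1, \<beta> := v + 1)) a = s}"
  consider "s = v" | "s = v - 1" | "s = v + 1" | "s \<noteq> v" "s \<noteq> v - 1" "s \<noteq> v + 1" by blast
  then show ?thesis
  proof cases
    case 1
    then have "?B = ?A - {\<alpha>, \<beta>}" "{\<alpha>, \<beta>} \<subseteq> ?A" using assms by auto
    then show ?thesis
      using 1 assms(3) num_chips_ge_two[OF assms] by (simp add: num_chips_def card_Diff_subset)
  next
    case 2
    then have "?B = insert \<alpha> ?A" "\<alpha> \<notin> ?A" using assms by auto
    then show ?thesis using 2 by (simp add: num_chips_def)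
  next
    case 3
    then have "?B = insert \<beta> ?A" "\<beta> \<notin> ?A" using assms by auto
    then show ?thesis using 3 by (simp add: num_chips_def)
  next
    case 4
    then have "?B = ?A" using assms by auto
    then show ?thesis using 4 by (simp add: num_chips_def)
  qed
qed

lemma num_chips_le_fire:
  assumes "\<alpha> \<in> chips m" "\<beta> \<in> chips m" "\<alpha> \<noteq> \<beta>" "c \<alpha> = v" "c \<beta> = v"
  shows "int (num_chips_le m (c(\<alpha> := v - 1, \<beta> := v + 1)) s) = int (num_chips_le m c s)
     + (if s = v - 1 then 1 else 0) - (if s = v then 1 else 0)"
proof -
  let ?A = "{a \<in> chips m. c a \<le> s}" and ?B = "{a \<in> chips m. (c(\<alpha> := v - 1, \<beta> := v + 1)) a \<le> s}"
  consider "s < v - 1" | "s = v - 1" | "s = v" | "s > v" by linarith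
  then show ?thesis
  proof cases
    case 1
    then have "?B = ?A" using assms by auto
    then show ?thesis using 1 by (simp add: num_chips_le_def)
  next
    case 2
    then have "?B = insert \<alpha> ?A" "\<alpha> \<notin> ?A" using assms by auto
    then show ?thesis using 2 by (simp add: num_chips_le_def)
  next
    case 3
    then have "?B = ?A - {\<beta>}" and "\<beta> \<in> ?A" using assms by auto
    then have "card ?B = card ?A - 1" "card ?A \<ge> 1"
      by (simp_all add: Suc_le_eq card_gt_0_iff) blast
    then show ?thesis using 3 by (simp add: num_chips_le_def)
  next
    case 4
    then have "?B = ?A" using assms by auto
    then show ?thesis using 4 by (simp add: num_chips_le_def)
  qed
qed

lemma num_chips_le_split: "num_chips_le m c s = num_chips_le m c (s - 1) + num_chips m c s"
proof -
  have "{a \<in> chips m. c a \<le> s} = {a \<in> chips m. c a \<le> s - 1} \<union> {a \<in> chips m. c a = s}"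
    by auto
  moreover have "{a \<in> chips m. c a \<le> s - 1} \<inter> {a \<in> chips m. c a = s} = {}" by auto
  ultimately show ?thesis
    unfolding num_chips_le_def num_chips_def by (simp add: card_Un_disjoint)
qed

lemma num_chips_le_mono: "s \<le> t \<Longrightarrow> num_chips_le m c s \<le> num_chips_le m c t"
  unfolding num_chips_le_def by (rule card_mono) auto

lemma num_chips_le_total: "num_chips_le m c s \<le> m + 1"
  unfolding num_chips_le_def using card_mono[of "chips m" "{a \<in> chips m. c a \<le> s}"] by simp

lemma sorted_map_split_filter:
  "sorted (map f xs) \<Longrightarrow> xs = filter (\<lambda>x. f x < t) xs @ filter (\<lambda>x. \<not> f x < t) xs"
proof (induction xs)
  case (Cons x xs)
  show ?case
  proof (cases "f x < t")
    case False
    then have "\<forall>y \<in> set xs. \<not> f y < t" using Cons.prems by auto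
    then show ?thesis using False by simp
  qed (use Cons in simp)
qed simp

lemma set_take_reading:
  "set (take (card {a \<in> chips m. c a < t}) (reading m c)) = {a \<in> chips m. c a < t}"
proof -
  define xs where "xs = reading m c"
  have sorted: "sorted (map c xs)" and "distinct xs" and set_xs: "set xs = chips m"
    unfolding xs_def reading_def chips_def by auto
  have "xs = filter (\<lambda>a. c a < t) xs @ filter (\<lambda>a. \<not> c a < t) xs"
    using sorted by (rule sorted_map_split_filter)
  moreover have "{a. c a < t} \<inter> set xs = {a \<in> chips m. c a < t}" using set_xs by auto
  then have "length (filter (\<lambda>a. c a < t) xs) = card {a \<in> chips m. c a < t}"
    using distinct_length_filter[OF \<open>distinct xs\<close>] by simp
  ultimately have "take (card {a \<in> chips m. c a < t}) xs = filter (\<lambda>a. c a < t) xs"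
    by (metis append_eq_conv_conj)
  then show ?thesis using \<open>set xs = chips m\<close> unfolding xs_def by auto
qed

section \<open>Confluence of toppling\<close>

definition prefix_balanced :: "nat \<Rightarrow> config \<Rightarrow> bool" where
  "prefix_balanced m c \<longleftrightarrow>
     (\<forall>s. -1 \<le> s \<and> s \<le> int m + 1 \<longrightarrow> s \<le> int (num_chips_le m c s) \<and> int (num_chips_le m c s) \<le> s + 1)"

lemma prefix_balanced_firing_site:
  assumes bal: "prefix_balanced m c"
    and "\<alpha> \<in> chips m" "\<beta> \<in> chips m" "\<alpha> \<noteq> \<beta>" "c \<alpha> = v" "c \<beta> = v"
  shows "int (num_chips_le m c (v - 1)) = v - 1" "int (num_chips_le m c v) = v + 1"
    "num_chips m c v = 2"
proof -
  have two: "num_chips m c v \<ge> 2" using num_chips_ge_two assms(2-) by blast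
  have split: "num_chips_le m c v = num_chips_le m c (v - 1) + num_chips m c v"
    by (rule num_chips_le_split)
  have "v \<ge> 1"
  proof (rule ccontr)
    assume "\<not> v \<ge> 1"
    then have "num_chips_le m c v \<le> num_chips_le m c 0" by (intro num_chips_le_mono) auto
    moreover have "int (num_chips_le m c 0) \<le> 1"
      using bal[unfolded prefix_balanced_def, THEN spec[of _ 0]] by simp
    ultimately show False using split two by linarith
  qed
  moreover have "v \<le> int m"
  proof (rule ccontr)
    assume "\<not> v \<le> int m"
    then have "num_chips_le m c (int m) \<le> num_chips_le m c (v - 1)" by (intro num_chips_le_mono) auto
    moreover have "int m \<le> int (num_chips_le m c (int m))"
      using bal[unfolded prefix_balanced_def, THEN spec[of _ "int m"]] by simp
    ultimately show False using split two num_chips_le_total[of m c v] by linarith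
  qed
  ultimately have "v - 1 \<le> int (num_chips_le m c (v - 1))" "int (num_chips_le m c v) \<le> v + 1"
    using bal[unfolded prefix_balanced_def, THEN spec[of _ "v - 1"]]
      bal[unfolded prefix_balanced_def, THEN spec[of _ v]] by simp_all
  then show "int (num_chips_le m c (v - 1)) = v - 1" "int (num_chips_le m c v) = v + 1"
    "num_chips m c v = 2"
    using split two by linarith+
qed

lemma prefix_balanced_topple_step:
  assumes bal: "prefix_balanced m c" and "topple_step m c c'"
  shows "prefix_balanced m c'"
proof -
  obtain \<alpha> \<beta> v where fire: "\<alpha> \<in> chips m" "\<beta> \<in> chips m" "\<alpha> < \<beta>" "c \<alpha> = v" "c \<beta> = v"
    and c': "c' = c(\<alpha> := v - 1, \<beta> := v + 1)"
    using \<open>topple_step m c c'\<close> by (rule topple_stepE)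
  then have "\<alpha> \<noteq> \<beta>" by simp
  note site = prefix_balanced_firing_site[OF bal fire(1,2) this fire(4,5)]
  show ?thesis
    unfolding prefix_balanced_def
  proof (intro allI impI)
    fix s :: int
    assume "-1 \<le> s \<and> s \<le> int m + 1"
    then have "s \<le> int (num_chips_le m c s) \<and> int (num_chips_le m c s) \<le> s + 1"
      using bal unfolding prefix_balanced_def by blast
    then show "s \<le> int (num_chips_le m c' s) \<and> int (num_chips_le m c' s) \<le> s + 1"
      unfolding c' num_chips_le_fire[OF fire(1,2) \<open>\<alpha> \<noteq> \<beta>\<close> fire(4,5)] using site(1,2) by auto
  qed
qed

abbreviation balanced_topple_step :: "nat \<Rightarrow> config \<Rightarrow> config \<Rightarrow> bool" where
  "balanced_topple_step m c c' \<equiv> prefix_balanced m c \<and> topple_step m c c'"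

lemma topple_step_diamond:
  assumes bal: "prefix_balanced m c"
    and step1: "topple_step m c c1" and step2: "topple_step m c c2" and "c1 \<noteq> c2"
  shows "\<exists>d. topple_step m c1 d \<and> topple_step m c2 d"
proof -
  obtain \<alpha>1 \<beta>1 v where fire1: "\<alpha>1 \<in> chips m" "\<beta>1 \<in> chips m" "\<alpha>1 < \<beta>1" "c \<alpha>1 = v" "c \<beta>1 = v"
    and c1: "c1 = c(\<alpha>1 := v - 1, \<beta>1 := v + 1)" using step1 by (rule topple_stepE)
  obtain \<alpha>2 \<beta>2 w where fire2: "\<alpha>2 \<in> chips m" "\<beta>2 \<in> chips m" "\<alpha>2 < \<beta>2" "c \<alpha>2 = w" "c \<beta>2 = w"
    and c2: "c2 = c(\<alpha>2 := w - 1, \<beta>2 := w + 1)" using step2 by (rule topple_stepE)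
  have ne: "\<alpha>1 \<noteq> \<beta>1" "\<alpha>2 \<noteq> \<beta>2" using fire1(3) fire2(3) by auto
  note site1 = prefix_balanced_firing_site[OF bal fire1(1,2) ne(1) fire1(4,5)]
  note site2 = prefix_balanced_firing_site[OF bal fire2(1,2) ne(2) fire2(4,5)]
  have "v \<noteq> w"
  proof
    assume "v = w"
    then have "{\<alpha>1, \<beta>1} = {\<alpha>2, \<beta>2}"
      using site1(3) num_chips_two_iff[OF fire1(1,2) ne(1) fire1(4,5)]
        num_chips_two_iff[OF fire2(1,2) ne(2)] fire2(4,5) by simp
    then have "\<alpha>1 = \<alpha>2 \<and> \<beta>1 = \<beta>2" using fire1(3) fire2(3) by (auto simp: doubleton_eq_iff)
    with \<open>v = w\<close> c1 c2 \<open>c1 \<noteq> c2\<close> show False by simp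
  qed
  moreover have "w \<noteq> v + 1" "v \<noteq> w + 1" using site1 site2 by auto
  ultimately have distinct: "\<alpha>1 \<noteq> \<alpha>2" "\<alpha>1 \<noteq> \<beta>2" "\<beta>1 \<noteq> \<alpha>2" "\<beta>1 \<noteq> \<beta>2" "c1 \<alpha>2 = w" "c1 \<beta>2 = w"
    "c2 \<alpha>1 = v" "c2 \<beta>1 = v"
    using fire1(4,5) fire2(4,5) c1 c2 by auto
  define d where "d = c(\<alpha>1 := v - 1, \<beta>1 := v + 1, \<alpha>2 := w - 1, \<beta>2 := w + 1)"
  have "d = c1(\<alpha>2 := w - 1, \<beta>2 := w + 1)" "d = c2(\<alpha>1 := v - 1, \<beta>1 := v + 1)"
    unfolding d_def c1 c2 using distinct(1-4) by (auto intro!: ext)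
  then show ?thesis
    using topple_stepI[OF fire2(1-3) distinct(5,6)] topple_stepI[OF fire1(1-3) distinct(7,8)] by auto
qed

lemma strong_confluentp_balanced_topple_step:
  "strong_confluentp (balanced_topple_step m)"
proof
  fix c c1 c2
  assume "prefix_balanced m c \<and> topple_step m c c1" "prefix_balanced m c \<and> topple_step m c c2"
  then have bal: "prefix_balanced m c1" "prefix_balanced m c2"
    and steps: "prefix_balanced m c" "topple_step m c c1" "topple_step m c c2"
    using prefix_balanced_topple_step by blast+
  show "\<exists>d. (balanced_topple_step m)\<^sup>*\<^sup>* c1 d
    \<and> (balanced_topple_step m)\<^sup>=\<^sup>= c2 d"
  proof (cases "c1 = c2")
    case False
    then obtain d where "topple_step m c1 d" "topple_step m c2 d"
      using topple_step_diamond steps by blast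
    then show ?thesis using bal by (intro exI[of _ d]) auto
  qed (intro exI[of _ c1], simp)
qed

lemma balanced_topple_steps_iff:
  assumes "prefix_balanced m c"
  shows "(topple_step m)\<^sup>*\<^sup>* c c' \<longleftrightarrow> (balanced_topple_step m)\<^sup>*\<^sup>* c c'"
proof
  show "(balanced_topple_step m)\<^sup>*\<^sup>* c c'"
    if "(topple_step m)\<^sup>*\<^sup>* c c'"
    using that assms
  proof (induction rule: converse_rtranclp_induct)
    case (step c c'')
    then have "prefix_balanced m c''" using prefix_balanced_topple_step by blast
    with step show ?case by (simp add: converse_rtranclp_into_rtranclp)
  qed simp
next
  show "(topple_step m)\<^sup>*\<^sup>* c c'"
    if "(balanced_topple_step m)\<^sup>*\<^sup>* c c'"
    using that by (rule rtranclp_mono[THEN predicate2D, rotated]) auto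
qed

lemma stable_no_topple_step: "stable m c \<Longrightarrow> \<not> topple_step m c c'"
  unfolding stable_def topple_step_def inj_on_def by force

lemma stable_reduct_unique:
  assumes "prefix_balanced m c"
    and "(topple_step m)\<^sup>*\<^sup>* c c1" "stable m c1" and "(topple_step m)\<^sup>*\<^sup>* c c2" "stable m c2"
  shows "c1 = c2"
proof -
  let ?r = "balanced_topple_step m"
  have conf: "confluentp ?r"
    using strong_confluentp_balanced_topple_step by (rule strong_confluentp_imp_confluentp)
  have "?r\<^sup>*\<^sup>* c c1" "?r\<^sup>*\<^sup>* c c2"
    using assms(2,4) unfolding balanced_topple_steps_iff[OF assms(1)] .
  then obtain d where d: "?r\<^sup>*\<^sup>* c1 d" "?r\<^sup>*\<^sup>* c2 d"
    using confluentpD[OF conf] by blast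
  have "c' = d" if "?r\<^sup>*\<^sup>* c' d" "stable m c'" for c'
    using that(1) by (rule converse_rtranclpE) (simp_all add: stable_no_topple_step[OF that(2)])
  then show ?thesis using d assms(3,5) by metis
qed

section \<open>Toppling in waves\<close>

locale chip_line =
  fixes m p :: nat
  assumes p_pos: "1 \<le> p" and p_le: "p \<le> m"
begin

abbreviation h :: nat where
  "h \<equiv> m + 1 - p"

text \<open>Chip counts during wave \<open>j\<close> while the two-chip site is \<open>k\<close>: one chip on each of the
  sites \<open>0, \<dots>, m\<close> except the empty sites \<open>j\<close> and \<open>k + 1\<close>, a second chip on \<open>k\<close>, and the
  chip already pushed to \<open>p + j + 1\<close>. For \<open>k = p + j\<close> the last two corrections cancel, which
  gives the counts between waves.\<close>

definition wave_load :: "nat \<Rightarrow> int \<Rightarrow> int \<Rightarrow> int" where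
  "wave_load j k s = (if 0 \<le> s \<and> s \<le> int m \<and> s \<noteq> int j then 1 else 0)
     + (if s = k then 1 else 0) - (if s = k + 1 then 1 else 0) + (if s = int (p + j) + 1 then 1 else 0)"

definition small_below :: "nat \<Rightarrow> config \<Rightarrow> bool" where
  "small_below j c \<longleftrightarrow> (\<forall>a \<in> chips m. c a < int j \<longrightarrow> a \<le> h)"

definition wave_state :: "nat \<Rightarrow> int \<Rightarrow> config \<Rightarrow> bool" where
  "wave_state j k c \<longleftrightarrow> (\<forall>s. int (num_chips m c s) = wave_load j k s) \<and> small_below j c
     \<and> (\<exists>a \<in> chips m. a \<le> h \<and> int j \<le> c a \<and> c a \<le> k)"

lemma wave_load_between_waves:
  "wave_load j (int (p + j)) s = (if 0 \<le> s \<and> s \<le> int m \<and> s \<noteq> int j then 1 else 0)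
     + (if s = int (p + j) then 1 else 0)"
  unfolding wave_load_def by simp

lemma wave_load_next: "j < h \<Longrightarrow> wave_load j (int j) = wave_load (Suc j) (int (p + Suc j))"
  using p_pos unfolding wave_load_def by (intro ext) auto

lemma wave_load_fire:
  "wave_load j (k - 1) s = wave_load j k s
     - (if s = k then 2 else 0) + (if s = k - 1 then 1 else 0) + (if s = k + 1 then 1 else 0)"
  unfolding wave_load_def by simp

lemma wave_state_topple_step:
  assumes state: "wave_state j k c" and "j < h" and k: "int j < k" "k \<le> int (p + j)"
  shows "\<exists>c'. topple_step m c c' \<and> wave_state j (k - 1) c'"
proof -
  have load: "\<And>s. int (num_chips m c s) = wave_load j k s" and small: "small_below j c"
    and window: "\<exists>a \<in> chips m. a \<le> h \<and> int j \<le> c a \<and> c a \<le> k"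
    using state unfolding wave_state_def by blast+
  have "k \<le> int m" using k \<open>j < h\<close> by linarith
  then have "num_chips m c k = 2" using load[of k] k by (simp add: wave_load_def)
  then obtain x y where xy: "{a \<in> chips m. c a = k} = {x, y}" "x \<noteq> y"
    unfolding num_chips_def card_2_iff by blast
  define \<alpha> where "\<alpha> = min x y"
  define \<beta> where "\<beta> = max x y"
  have "{x, y} = {\<alpha>, \<beta>}" "\<alpha> < \<beta>" using xy(2) by (auto simp: \<alpha>_def \<beta>_def min_def max_def)
  then have pair: "{a \<in> chips m. c a = k} = {\<alpha>, \<beta>}" "\<alpha> < \<beta>" "\<alpha> \<in> chips m" "\<beta> \<in> chips m"
    "c \<alpha> = k" "c \<beta> = k"
    using xy(1) by blast+
  define c' where "c' = c(\<alpha> := k - 1, \<beta> := k + 1)"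
  have "topple_step m c c'"
    unfolding c'_def by (rule topple_stepI) (use pair in auto)
  moreover have "int (num_chips m c' s) = wave_load j (k - 1) s" for s
  proof -
    have "\<alpha> \<noteq> \<beta>" using pair(2) by simp
    from num_chips_fire[OF pair(3,4) this pair(5,6)] show ?thesis
      unfolding c'_def wave_load_fire load .
  qed
  moreover have "small_below j c'"
    using small k pair(2) unfolding small_below_def c'_def by auto
  moreover have "\<exists>a \<in> chips m. a \<le> h \<and> int j \<le> c' a \<and> c' a \<le> k - 1"
  proof -
    obtain a where a: "a \<in> chips m" "a \<le> h" "int j \<le> c a" "c a \<le> k" using window by blast
    show ?thesis
    proof (cases "c a = k")
      case True
      text \<open>The left-moving chip is the smaller of the pair, so it is small whenever one of them is.\<close>
      then have "\<alpha> \<le> h" using a pair(1,2) by auto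
      then show ?thesis using pair(2,3) k unfolding c'_def by (intro bexI[of _ \<alpha>]) auto
    next
      case False
      then have "c' a = c a" using pair(5,6) unfolding c'_def by auto
      then show ?thesis using a False by (intro bexI[of _ a]) auto
    qed
  qed
  ultimately show ?thesis unfolding wave_state_def by blast
qed

lemma wave_state_run:
  assumes "j < h"
  shows "d \<le> p \<Longrightarrow> wave_state j (int j + int d) c
    \<Longrightarrow> \<exists>c'. (topple_step m)\<^sup>*\<^sup>* c c' \<and> wave_state j (int j) c'"
proof (induction d arbitrary: c)
  case (Suc d)
  have "int j < int j + int (Suc d)" "int j + int (Suc d) \<le> int (p + j)" using Suc.prems(1) by auto
  then obtain c1 where "topple_step m c c1" "wave_state j (int j + int (Suc d) - 1) c1"
    using wave_state_topple_step[OF Suc.prems(2) assms] by blast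
  moreover have "int j + int (Suc d) - 1 = int j + int d" by simp
  ultimately have "topple_step m c c1" "wave_state j (int j + int d) c1" by simp_all
  moreover obtain c' where "(topple_step m)\<^sup>*\<^sup>* c1 c'" "wave_state j (int j) c'"
    using Suc.IH Suc.prems(1) \<open>wave_state j (int j + int d) c1\<close> by auto
  ultimately show ?case using converse_rtranclp_into_rtranclp by metis
qed auto

lemma wave_state_start:
  assumes load: "\<And>s. int (num_chips m c s) = wave_load j (int (p + j)) s"
    and small: "small_below j c" and "j < h"
  shows "wave_state j (int (p + j)) c"
proof -
  have "\<exists>a \<in> chips m. a \<le> h \<and> int j \<le> c a \<and> c a \<le> int (p + j)"
  proof (rule ccontr)
    assume none: "\<not> ?thesis"
    text \<open>Pigeonhole: otherwise the \<open>h\<close> small chips sit on distinct sites outside the window,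
      and there are only \<open>h - 1\<close> such sites.\<close>
    define T where "T = {0..<int j} \<union> {int (p + j) + 1..int m}"
    have small_chips: "{1..h} \<subseteq> chips m" unfolding chips_def by auto
    have "c ` {1..h} \<subseteq> T"
    proof
      fix s assume "s \<in> c ` {1..h}"
      then obtain a where a: "a \<in> {1..h}" "s = c a" by blast
      then have "a \<in> chips m" "a \<le> h" using small_chips by auto
      then have "\<not> (int j \<le> s \<and> s \<le> int (p + j))" "num_chips m c s \<ge> 1"
        using none num_chips_pos[of a m c] unfolding a(2) by auto
      then show "s \<in> T" using load[of s] unfolding wave_load_between_waves T_def
        by (auto split: if_splits)
    qed
    moreover have "inj_on c {1..h}"
    proof (rule inj_onI)
      fix a b assume ab: "a \<in> {1..h}" "b \<in> {1..h}" "c a = c b"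
      have chips: "a \<in> chips m" "b \<in> chips m" using ab(1,2) small_chips by auto
      then have "\<not> (int j \<le> c a \<and> c a \<le> int (p + j))" using none ab(1) by auto
      then have "c a \<noteq> int (p + j)" by linarith
      then have "int (num_chips m c (c a)) \<le> 1"
        using load[of "c a"] unfolding wave_load_between_waves by simp
      then have "num_chips m c (c a) \<le> 1" by simp
      from num_chips_le_one_inj[OF this chips refl ab(3)[symmetric]] show "a = b" .
    qed
    ultimately have "card {1..h} \<le> card T"
      by (intro card_inj_on_le) (simp_all add: T_def)
    moreover have "card T = j + (m - (p + j))"
    proof -
      have "{0..<int j} \<inter> {int (p + j) + 1..int m} = {}" by auto
      then have "card T = card {0..<int j} + card {int (p + j) + 1..int m}"
        unfolding T_def by (simp add: card_Un_disjoint)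
      then show ?thesis by simp
    qed
    ultimately show False using \<open>j < h\<close> by simp
  qed
  then show ?thesis using load small unfolding wave_state_def by blast
qed

lemma wave_state_end:
  assumes "wave_state j (int j) c"
  shows "small_below (Suc j) c"
proof -
  obtain a where a: "a \<in> chips m" "a \<le> h" "c a = int j"
    and load: "\<And>s. int (num_chips m c s) = wave_load j (int j) s" and small: "small_below j c"
    using assms unfolding wave_state_def by force
  have "num_chips m c (int j) \<le> 1" using load[of "int j"] by (simp add: wave_load_def)
  then have unique: "b = a" if "b \<in> chips m" "c b = int j" for b
    using num_chips_le_one_inj that a(1,3) by blast
  show ?thesis
    unfolding small_below_def
  proof (intro ballI impI)
    fix b assume b: "b \<in> chips m" "c b < int (Suc j)"
    show "b \<le> h"
    proof (cases "c b = int j")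
      case True
      then show ?thesis using unique b(1) a(2) by blast
    next
      case False
      then show ?thesis using small b unfolding small_below_def by auto
    qed
  qed
qed

lemma waves_reachable:
  assumes "\<And>s. int (num_chips m c s) = wave_load 0 (int p) s" and "small_below 0 c"
  shows "j \<le> h \<Longrightarrow> \<exists>c'. (topple_step m)\<^sup>*\<^sup>* c c'
    \<and> (\<forall>s. int (num_chips m c' s) = wave_load j (int (p + j)) s) \<and> small_below j c'"
proof (induction j)
  case 0
  then show ?case using assms by auto
next
  case (Suc j)
  then have "j < h" by simp
  obtain c1 where c1: "(topple_step m)\<^sup>*\<^sup>* c c1"
    "\<And>s. int (num_chips m c1 s) = wave_load j (int (p + j)) s" "small_below j c1"
    using Suc.IH \<open>j < h\<close> by auto
  have "wave_state j (int (p + j)) c1" using wave_state_start[OF c1(2,3) \<open>j < h\<close>] .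
  moreover have "int (p + j) = int j + int p" by simp
  ultimately obtain c2 where c2: "(topple_step m)\<^sup>*\<^sup>* c1 c2" "wave_state j (int j) c2"
    using wave_state_run[OF \<open>j < h\<close> order_refl] by metis
  have "(topple_step m)\<^sup>*\<^sup>* c c2" using c1(1) c2(1) by (rule rtranclp_trans)
  moreover have "\<forall>s. int (num_chips m c2 s) = wave_load (Suc j) (int (p + Suc j)) s"
    using c2(2) wave_load_next[OF \<open>j < h\<close>] unfolding wave_state_def by simp
  ultimately show ?case using wave_state_end[OF c2(2)] by blast
qed

lemma after_waves_stable:
  assumes "\<And>s. int (num_chips m c s) = wave_load h (int (p + h)) s"
  shows "stable m c"
  unfolding stable_def
proof (rule inj_onI)
  fix a b assume ab: "a \<in> chips m" "b \<in> chips m" "c a = c b"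
  have "int (num_chips m c (c a)) \<le> 1"
    using assms[of "c a"] p_le unfolding wave_load_between_waves by simp
  then have "num_chips m c (c a) \<le> 1" by simp
  from num_chips_le_one_inj[OF this ab(1,2) refl ab(3)[symmetric]] show "a = b" .
qed

lemma after_waves_small_prefix:
  assumes load: "\<And>s. int (num_chips m c s) = wave_load h (int (p + h)) s" and "small_below h c"
  shows "{a \<in> chips m. c a < int h} = {1..h}"
proof -
  let ?X = "{a \<in> chips m. c a < int h}"
  have sub: "?X \<subseteq> {1..h}" using \<open>small_below h c\<close> unfolding small_below_def chips_def by auto
  have "{0..<int h} \<subseteq> c ` ?X"
  proof
    fix s assume s: "s \<in> {0..<int h}"
    then have "s \<le> int m" using p_pos by auto
    then have "num_chips m c s \<noteq> 0" using load[of s] s unfolding wave_load_between_waves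
      by simp
    then have "{a \<in> chips m. c a = s} \<noteq> {}" unfolding num_chips_def by (metis card.empty)
    then obtain a where "a \<in> chips m" "c a = s" by blast
    then show "s \<in> c ` ?X" using s by auto
  qed
  then have "card {0..<int h} \<le> card (c ` ?X)" by (intro card_mono) auto
  also have "\<dots> \<le> card ?X" by (intro card_image_le) simp
  finally have "h \<le> card ?X" by simp
  then show ?thesis using card_subset_eq[OF _ sub] card_mono[OF _ sub] by simp
qed

lemma init_configs_wave_load:
  assumes "c \<in> init_configs m p"
  shows "int (num_chips m c s) = wave_load 0 (int p) s"
proof -
  have sites: "\<forall>a \<in> chips m. 1 \<le> c a \<and> c a \<le> int m"
    and counts: "\<forall>s \<in> {1..int m}. num_chips m c s = (if s = int p then 2 else 1)"
    using assms unfolding init_configs_def num_chips_def by auto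
  show ?thesis
  proof (cases "s \<in> {1..int m}")
    case True
    then show ?thesis using counts p_pos by (auto simp: wave_load_def)
  next
    case False
    then have "{a \<in> chips m. c a = s} = {}" using sites by force
    then show ?thesis using False p_pos p_le by (auto simp: num_chips_def wave_load_def)
  qed
qed

lemma init_configs_small_below: "c \<in> init_configs m p \<Longrightarrow> small_below 0 c"
  unfolding init_configs_def small_below_def by force

lemma init_configs_prefix_balanced:
  assumes "c \<in> init_configs m p"
  shows "prefix_balanced m c"
proof -
  note load = init_configs_wave_load[OF assms]
  have "{a \<in> chips m. c a \<le> -1} = {}" using assms unfolding init_configs_def by force
  then have below: "num_chips_le m c (-1) = 0" unfolding num_chips_le_def by simp
  have upto: "num_chips_le m c (int t) = min t m + (if p \<le> t then 1 else 0)" for t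
  proof (induction t)
    case 0
    have "num_chips m c 0 = 0" using load[of 0] p_pos by (simp add: wave_load_def)
    then show ?case using num_chips_le_split[of m c 0] below p_pos by simp
  next
    case (Suc t)
    have "int (num_chips m c (int (Suc t))) = (if Suc t \<le> m then 1 else 0) + (if Suc t = p then 1 else 0)"
      using load[of "int (Suc t)"] by (simp add: wave_load_def)
    then show ?case using num_chips_le_split[of m c "int (Suc t)"] Suc.IH p_pos
      by (auto simp: min_def)
  qed
  show ?thesis
    unfolding prefix_balanced_def
  proof (intro allI impI)
    fix s :: int assume s: "-1 \<le> s \<and> s \<le> int m + 1"
    show "s \<le> int (num_chips_le m c s) \<and> int (num_chips_le m c s) \<le> s + 1"
    proof (cases "s = -1")
      case False
      define t where "t = nat s"
      have "s = int t" "t \<le> m + 1" using s False unfolding t_def by auto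
      then show ?thesis using upto[of t] p_le by auto
    qed (simp add: below)
  qed
qed

lemma resultant_small_prefix:
  assumes "c \<in> init_configs m p" and "topples_to m c \<pi>"
  shows "set (take h \<pi>) = {1..h}"
proof -
  obtain c' where c': "(topple_step m)\<^sup>*\<^sup>* c c'" "stable m c'" "reading m c' = \<pi>"
    using assms(2) unfolding topples_to_def by blast
  obtain d where d: "(topple_step m)\<^sup>*\<^sup>* c d"
      "\<And>s. int (num_chips m d s) = wave_load h (int (p + h)) s" "small_below h d"
    using waves_reachable[OF init_configs_wave_load[OF assms(1)] init_configs_small_below[OF assms(1)] order_refl]
    by blast
  have "c' = d"
    using stable_reduct_unique[OF init_configs_prefix_balanced[OF assms(1)] c'(1,2) d(1)]
      after_waves_stable[OF d(2)] by blast
  then show ?thesis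
    using set_take_reading[of m d "int h"] after_waves_small_prefix[OF d(2,3)] c'(3) by simp
qed

end

section \<open>Realising a permutation\<close>

text \<open>Chip \<open>\<pi> ! i\<close> is put on site \<open>g i\<close>; labels outside \<open>\<pi>\<close> go to site \<open>0\<close>, so that
  \<open>place \<pi> g\<close> depends only on the values of \<open>g\<close> on indices of \<open>\<pi>\<close>.\<close>

definition place :: "nat list \<Rightarrow> (nat \<Rightarrow> int) \<Rightarrow> config" where
  "place \<pi> g a = (if a \<in> set \<pi> then g (the_inv_into {..<length \<pi>} ((!) \<pi>) a) else 0)"

lemma place_nth: "distinct \<pi> \<Longrightarrow> i < length \<pi> \<Longrightarrow> place \<pi> g (\<pi> ! i) = g i"
  unfolding place_def by (simp add: the_inv_into_f_f inj_on_nth)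

lemma place_cong:
  assumes "distinct \<pi>" and "\<And>i. i < length \<pi> \<Longrightarrow> g i = g' i"
  shows "place \<pi> g = place \<pi> g'"
proof
  fix a
  show "place \<pi> g a = place \<pi> g' a"
  proof (cases "a \<in> set \<pi>")
    case True
    then obtain i where "i < length \<pi>" "a = \<pi> ! i" by (auto simp: in_set_conv_nth)
    then show ?thesis using place_nth[OF assms(1)] assms(2) by simp
  qed (simp add: place_def)
qed

lemma place_upd:
  assumes "distinct \<pi>" and "i < length \<pi>"
  shows "(place \<pi> g)(\<pi> ! i := x) = place \<pi> (g(i := x))"
proof
  fix a
  show "((place \<pi> g)(\<pi> ! i := x)) a = place \<pi> (g(i := x)) a"
  proof (cases "a \<in> set \<pi>")
    case True
    then obtain j where "j < length \<pi>" "a = \<pi> ! j" by (auto simp: in_set_conv_nth)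
    then show ?thesis using place_nth[OF assms(1)] assms nth_eq_iff_index_eq by fastforce
  qed (use assms(2) in \<open>auto simp: place_def\<close>)
qed

lemma card_place:
  assumes "distinct \<pi>"
  shows "card {a \<in> set \<pi>. place \<pi> g a = s} = card {i. i < length \<pi> \<and> g i = s}"
proof -
  have "{a \<in> set \<pi>. place \<pi> g a = s} = (!) \<pi> ` {i. i < length \<pi> \<and> g i = s}"
    using place_nth[OF assms] by (auto simp: in_set_conv_nth)
  moreover have "inj_on ((!) \<pi>) {i. i < length \<pi> \<and> g i = s}"
    using assms by (simp add: inj_on_nth)
  ultimately show ?thesis by (simp add: card_image)
qed

lemma stable_place:
  assumes "distinct \<pi>" "set \<pi> = chips m" "strict_mono_on {..<length \<pi>} g"
  shows "stable m (place \<pi> g)"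
  unfolding stable_def
proof (rule inj_onI)
  fix a b assume ab: "a \<in> chips m" "b \<in> chips m" "place \<pi> g a = place \<pi> g b"
  obtain i j where ij: "i < length \<pi>" "a = \<pi> ! i" "j < length \<pi>" "b = \<pi> ! j"
    using ab(1,2) unfolding assms(2)[symmetric] in_set_conv_nth by blast
  then have "g i = g j" using ab(3) place_nth[OF assms(1)] by simp
  then have "j = i" using strict_mono_on_eqD[OF assms(3)] ij(1,3) by simp
  then show "a = b" using ij by simp
qed

lemma reading_place:
  assumes "distinct \<pi>" "set \<pi> = chips m" "strict_mono_on {..<length \<pi>} g"
  shows "reading m (place \<pi> g) = \<pi>"
  unfolding reading_def
proof (rule sort_key_inj_key_eq)
  have labels: "set [1..<m + 2] = chips m" by (auto simp: chips_def)
  have "distinct [1..<m + 2]" by simp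
  then show "mset [1..<m + 2] = mset \<pi>"
    using assms(1,2) labels set_eq_iff_mset_eq_distinct by metis
  show "inj_on (place \<pi> g) (set [1..<m + 2])"
    using stable_place[OF assms] unfolding stable_def labels .
  have "map (place \<pi> g) \<pi> = map g [0..<length \<pi>]"
    by (rule nth_equalityI) (simp_all add: place_nth[OF assms(1)])
  moreover have "sorted (map g [0..<length \<pi>])"
  proof (rule sorted_iff_nth_mono[THEN iffD2], intro allI impI)
    fix i j assume "i \<le> j" "j < length (map g [0..<length \<pi>])"
    then show "map g [0..<length \<pi>] ! i \<le> map g [0..<length \<pi>] ! j"
      using strict_mono_on_leD[OF assms(3), of i j] by simp
  qed
  ultimately show "sorted (map (place \<pi> g) \<pi>)" by simp
qed

locale small_prefix_perm = chip_line +
  fixes \<pi> :: "nat list"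
  assumes distinct_\<pi>: "distinct \<pi>" and set_\<pi>: "set \<pi> = chips m"
    and set_take_\<pi>: "set (take h \<pi>) = {1..h}"
begin

text \<open>Sites in wave \<open>j\<close> while the travelling chip \<open>\<pi> ! j\<close> is on site \<open>k\<close>: the chips
  \<open>\<pi> ! i\<close> with \<open>i < j\<close> have settled on site \<open>i\<close>, the small chips \<open>\<pi> ! i\<close> with \<open>j < i < h\<close>
  wait on site \<open>p + i\<close>, and the big chips \<open>\<pi> ! (h + b)\<close> fill the sites \<open>j + 1, \<dots>, j + p + 1\<close>
  except \<open>k + 1\<close>.\<close>

definition slot :: "nat \<Rightarrow> nat \<Rightarrow> nat \<Rightarrow> int" where
  "slot j k i =
     (if i < j then int i else if i = j then int k else if i < h then int (p + i)
      else if i - h + j + 1 \<le> k then int (i - h + j + 1) else int (i - h + j + 2))"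

lemma slot_fire:
  assumes "j < h" and "j < k"
  shows "slot j (k - 1) = (slot j k)(j := int k - 1, h + (k - j - 1) := int k + 1)"
  using assms unfolding slot_def by (intro ext) auto

lemma slot_next: "Suc j < h \<Longrightarrow> i \<le> m \<Longrightarrow> slot j j i = slot (Suc j) (p + Suc j) i"
  unfolding slot_def by auto

lemma slot_initial: "i \<le> m \<Longrightarrow> slot 0 p i = (if i < h then int (p + i) else int (i + 1 - h))"
  using p_pos p_le unfolding slot_def by auto

lemma slot_final: "i \<le> m \<Longrightarrow> slot (h - 1) (h - 1) i = (if i < h then int i else int i + 1)"
  using p_le unfolding slot_def by auto

lemma length_\<pi>: "length \<pi> = m + 1"
  using distinct_card[OF distinct_\<pi>] set_\<pi> by (simp add: chips_def)

lemma nth_small: "i < h \<Longrightarrow> \<pi> ! i \<le> h"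
  using set_take_\<pi> length_\<pi> p_le by (force simp: in_set_conv_nth)

lemma nth_big:
  assumes "h \<le> i" "i \<le> m"
  shows "h < \<pi> ! i"
proof -
  have "\<pi> ! i \<in> chips m" using assms length_\<pi> set_\<pi> nth_mem by fastforce
  moreover have "\<pi> ! i \<notin> set (take h \<pi>)"
    using assms distinct_\<pi> length_\<pi> by (auto simp: in_set_conv_nth nth_eq_iff_index_eq)
  ultimately show ?thesis using set_take_\<pi> by (auto simp: chips_def)
qed

lemma place_slot_topple_step:
  assumes "j < h" "j < k" "k \<le> p + j"
  shows "topple_step m (place \<pi> (slot j k)) (place \<pi> (slot j (k - 1)))"
proof -
  define b where "b = h + (k - j - 1)"
  have b: "h \<le> b" "b \<le> m" "j < b" using assms p_le unfolding b_def by auto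
  have lengths: "j < length \<pi>" "b < length \<pi>" using b length_\<pi> by auto
  have "\<pi> ! j < \<pi> ! b" using nth_small[OF assms(1)] nth_big[OF b(1,2)] by simp
  moreover have "place \<pi> (slot j k) (\<pi> ! j) = int k" "place \<pi> (slot j k) (\<pi> ! b) = int k"
    using place_nth[OF distinct_\<pi>] lengths b assms unfolding slot_def b_def by auto
  moreover have "\<pi> ! j \<in> chips m" "\<pi> ! b \<in> chips m" using lengths set_\<pi> nth_mem by blast+
  ultimately have "topple_step m (place \<pi> (slot j k))
      ((place \<pi> (slot j k))(\<pi> ! j := int k - 1, \<pi> ! b := int k + 1))"
    by (intro topple_stepI) auto
  also have "(place \<pi> (slot j k))(\<pi> ! j := int k - 1, \<pi> ! b := int k + 1)
      = place \<pi> ((slot j k)(j := int k - 1, b := int k + 1))"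
    by (simp only: place_upd[OF distinct_\<pi> lengths(1)] place_upd[OF distinct_\<pi> lengths(2)])
  also have "(slot j k)(j := int k - 1, b := int k + 1) = slot j (k - 1)"
    unfolding slot_fire[OF assms(1,2)] b_def ..
  finally show ?thesis .
qed

lemma place_slot_wave:
  assumes "j < h"
  shows "(topple_step m)\<^sup>*\<^sup>* (place \<pi> (slot j (p + j))) (place \<pi> (slot j j))"
proof -
  have "d \<le> p \<Longrightarrow> (topple_step m)\<^sup>*\<^sup>* (place \<pi> (slot j (j + d))) (place \<pi> (slot j j))" for d
  proof (induction d)
    case (Suc d)
    then have "topple_step m (place \<pi> (slot j (j + Suc d))) (place \<pi> (slot j (j + d)))"
      using place_slot_topple_step[OF assms, of "j + Suc d"] by simp
    then show ?case using Suc by (simp add: converse_rtranclp_into_rtranclp)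
  qed simp
  from this[OF order_refl] show ?thesis by (simp add: add.commute)
qed

lemma place_slot_waves:
  "j < h \<Longrightarrow> (topple_step m)\<^sup>*\<^sup>* (place \<pi> (slot 0 p)) (place \<pi> (slot j j))"
proof (induction j)
  case 0
  then show ?case using place_slot_wave[of 0] by simp
next
  case (Suc j)
  have "place \<pi> (slot j j) = place \<pi> (slot (Suc j) (p + Suc j))"
    using slot_next[OF Suc.prems] length_\<pi> by (intro place_cong[OF distinct_\<pi>]) simp
  then show ?case
    using Suc place_slot_wave[OF Suc.prems] by (simp add: rtranclp_trans)
qed

lemma place_slot_initial: "place \<pi> (slot 0 p) \<in> init_configs m p"
  unfolding init_configs_def
proof (intro CollectI conjI ballI)
  fix a assume "a \<in> chips m"
  then obtain i where "i < length \<pi>" "a = \<pi> ! i" unfolding set_\<pi>[symmetric] in_set_conv_nth by blast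
  then have i: "i \<le> m" "a = \<pi> ! i" using length_\<pi> by simp_all
  then have "place \<pi> (slot 0 p) a = (if i < h then int (p + i) else int (i + 1 - h))"
    using place_nth[OF distinct_\<pi>] length_\<pi> slot_initial by simp
  then show "1 \<le> place \<pi> (slot 0 p) a" "place \<pi> (slot 0 p) a \<le> int m"
    using i(1) p_pos p_le by auto
next
  fix s assume "s \<in> {1..int m}"
  define t where "t = nat s"
  have t: "s = int t" "1 \<le> t" "t \<le> m" using \<open>s \<in> {1..int m}\<close> unfolding t_def by auto
  text \<open>Site \<open>t\<close> holds the small chip \<open>\<pi> ! (t - p)\<close> if \<open>p \<le> t\<close> and the big chip
    \<open>\<pi> ! (t + h - 1)\<close> if \<open>t \<le> p\<close>.\<close>
  define I where "I = (if p \<le> t then {t - p} else {}) \<union> (if t \<le> p then {t + h - 1} else {})"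
  have "i < length \<pi> \<and> slot 0 p i = s \<longleftrightarrow> i \<in> I" for i
  proof (cases "i \<le> m")
    case True
    then show ?thesis using t p_le length_\<pi> unfolding slot_initial[OF True] I_def by auto
  next
    case False
    then show ?thesis using t p_le length_\<pi> unfolding I_def by auto
  qed
  then have "{i. i < length \<pi> \<and> slot 0 p i = s} = I" by blast
  moreover have "card I = (if s = int p then 2 else 1)"
  proof (cases "t = p")
    case True
    then have "I = {0, m}" using p_le unfolding I_def by auto
    then show ?thesis using True t by simp
  next
    case False
    then show ?thesis using t unfolding I_def by auto
  qed
  ultimately show "card {a \<in> chips m. place \<pi> (slot 0 p) a = s} = (if s = int p then 2 else 1)"
    using card_place[OF distinct_\<pi>, of "slot 0 p" s] set_\<pi> by simp
qed

lemma place_slot_topples_to: "topples_to m (place \<pi> (slot 0 p)) \<pi>"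
proof -
  define g :: "nat \<Rightarrow> int" where "g i = (if i < h then int i else int i + 1)" for i
  have mono: "strict_mono_on {..<length \<pi>} g" unfolding g_def by (auto intro: strict_mono_onI)
  have "h - 1 < h" using p_le by simp
  moreover have "place \<pi> (slot (h - 1) (h - 1)) = place \<pi> g"
    using slot_final length_\<pi> unfolding g_def by (intro place_cong[OF distinct_\<pi>]) simp
  ultimately have "(topple_step m)\<^sup>*\<^sup>* (place \<pi> (slot 0 p)) (place \<pi> g)"
    using place_slot_waves by metis
  then show ?thesis
    unfolding topples_to_def
    using stable_place[OF distinct_\<pi> set_\<pi> mono] reading_place[OF distinct_\<pi> set_\<pi> mono] by blast
qed

end

theorem theorem2p10:
  fixes n p :: nat and \<pi> :: "nat list"
  assumes "n \<ge> 2" and "1 \<le> p" and "p \<le> n - 1" and "is_perm n \<pi>"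
  shows "p_resultant n p \<pi> \<longleftrightarrow> set (take (n - p) \<pi>) = {1..n - p}"
proof -
  define m where "m = n - 1"
  have n: "n = m + 1" using assms(1) unfolding m_def by simp
  interpret chip_line m p using assms(2,3) by unfold_locales (simp_all add: m_def)
  have set_\<pi>: "set \<pi> = chips m" using assms(4) n by (simp add: is_perm_def chips_def)
  show ?thesis
  proof
    assume "p_resultant n p \<pi>"
    then obtain c where "c \<in> init_configs m p" "topples_to m c \<pi>"
      unfolding p_resultant_def m_def by blast
    then show "set (take (n - p) \<pi>) = {1..n - p}" using resultant_small_prefix n by simp
  next
    assume "set (take (n - p) \<pi>) = {1..n - p}"
    then interpret small_prefix_perm m p \<pi>
      using assms(4) set_\<pi> n by unfold_locales (simp_all add: is_perm_def)
    show "p_resultant n p \<pi>"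
      unfolding p_resultant_def m_def[symmetric] using place_slot_initial place_slot_topples_to by blast
  qed
qed

end
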